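(* Let $\lambda>0$, let $q:\mathbb{R}\to\mathbb{R}$ be infinitely differentiable and strictly positive, let $x(t)=\int_0^t\sqrt{q(u)}\,du$, and assume $x$ maps $\mathbb{R}$ onto $\mathbb{R}$ (with inverse $t(x)$). Let $p(x)=2\{t,x\}$. Suppose $\sigma\in L^1(\mathbb{R})\cap C(\mathbb{R})$ satisfies $$\sigma(x)=S[T\sigma](x)+p(x)\quad\text{for all }x\in\mathbb{R}.$$ Let $\delta(x)=T\sigma(x)=\frac1{4\lambda}\int_{\mathbb{R}}\sin(2\lambda|x-y|)\sigma(y)\,dy$ and $$\alpha(t)=\lambda\int_0^t\sqrt{q(u)}\exp\!\left(\tfrac{\delta(x(u))}{2}\right)du .$$ Then: (1) $\delta$ is a $C^2$ solution on $\mathbb{R}$ of $\ \delta''(x)-\frac14(\delta'(x))^2+4\lambda^2\left(e^{\delta(x)}-1\right)=p(x)$; (2) the function $\tilde\delta(t)=\delta(x(t))$ is a $C^2$ solution on $\mathbb{R}$ of $$\tilde\delta''(t)-\frac{q'(t)}{2q(t)}\tilde\delta'(t)-\frac14(\tilde\delta'(t))^2+4\lambda^2q(t)\left(e^{\tilde\delta(t)}-1\right)=q(t)\tilde p(t),\qquad \tilde p(t)=\frac{1}{q(t)}\left(\frac54\left(\frac{q'(t)}{q(t)}\right)^2-\frac{q''(t)}{q(t)}\right);$$ (3) $\alpha$ is a $C^3$ solution on $\mathbb{R}$ of Kummer's equation $$(\alpha'(t))^2=\lambda^2q(t)-\frac12\frac{\alpha'''(t)}{\alpha'(t)}+\frac34\left(\frac{\alpha''(t)}{\alpha'(t)}\right)^2;$$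 (4) $\alpha$ is a phase function for $y''(t)+\lambda^2q(t)y(t)=0$ on $[0,1]$.
   Context: The Schwarzian derivative of $f$ with respect to $s$ is $\{f,s\}=\frac{f'''}{f'}-\frac32\left(\frac{f''}{f'}\right)^2$; one has $p(x(t))=\tilde p(t)$. For $f\in C^1(\mathbb{R})$, $S[f](x)=\frac14(f'(x))^2-4\lambda^2\left(e^{f(x)}-1-f(x)\right)$. A sufficiently smooth $\alpha:[0,1]\to\mathbb{R}$ is a phase function for $y''+\lambda^2 q y=0$ on $[0,1]$ if $u=\cos(\alpha)/|\alpha'|^{1/2}$ and $v=\sin(\alpha)/|\alpha'|^{1/2}$ form a basis of the solution space of that equation on $[0,1]$. *)

theory Defs
  imports "HOL-Analysis.Analysis"
begin

definition Ck :: "nat \<Rightarrow> (real \<Rightarrow> real) \<Rightarrow> bool" where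
  "Ck k f \<longleftrightarrow> (\<forall>j<k. \<forall>x. (deriv ^^ j) f differentiable at x)
                 \<and> continuous_on UNIV ((deriv ^^ k) f)"

definition smooth_fun :: "(real \<Rightarrow> real) \<Rightarrow> bool" where
  "smooth_fun f \<longleftrightarrow> (\<forall>k. Ck k f)"

definition sint :: "real \<Rightarrow> real \<Rightarrow> (real \<Rightarrow> real) \<Rightarrow> real" where
  "sint a b f = (if a \<le> b then integral {a..b} f else - integral {b..a} f)"

definition xmap :: "(real \<Rightarrow> real) \<Rightarrow> real \<Rightarrow> real" where
  "xmap q t = sint 0 t (\<lambda>u. sqrt (q u))"

definition schwarzian :: "(real \<Rightarrow> real) \<Rightarrow> real \<Rightarrow> real" where
  "schwarzian f s = deriv (deriv (deriv f)) s / deriv f s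
                    - 3/2 * (deriv (deriv f) s / deriv f s)^2"

definition pfun :: "(real \<Rightarrow> real) \<Rightarrow> real \<Rightarrow> real" where
  "pfun q x = 2 * schwarzian (inv (xmap q)) x"

definition Top :: "real \<Rightarrow> (real \<Rightarrow> real) \<Rightarrow> real \<Rightarrow> real" where
  "Top lam \<sigma> x = (\<integral>y. sin (2 * lam * \<bar>x - y\<bar>) * \<sigma> y \<partial>lborel) / (4 * lam)"

definition Sop :: "real \<Rightarrow> (real \<Rightarrow> real) \<Rightarrow> real \<Rightarrow> real" where
  "Sop lam f x = 1/4 * (deriv f x)^2 - 4 * lam^2 * (exp (f x) - 1 - f x)"

definition is_ode_sol :: "real \<Rightarrow> (real \<Rightarrow> real) \<Rightarrow> (real \<Rightarrow> real) \<Rightarrow> bool" where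
  "is_ode_sol lam q y \<longleftrightarrow> (\<exists>y' y''. \<forall>t\<in>{0..1}.
      (y has_real_derivative y' t) (at t within {0..1}) \<and>
      (y' has_real_derivative y'' t) (at t within {0..1}) \<and>
      y'' t + lam^2 * q t * y t = 0)"

definition is_sol_basis :: "real \<Rightarrow> (real \<Rightarrow> real) \<Rightarrow> (real \<Rightarrow> real) \<Rightarrow> (real \<Rightarrow> real) \<Rightarrow> bool" where
  "is_sol_basis lam q u v \<longleftrightarrow>
     is_ode_sol lam q u \<and> is_ode_sol lam q v \<and>
     (\<forall>a b. (\<forall>t\<in>{0..1}. a * u t + b * v t = 0) \<longrightarrow> a = 0 \<and> b = 0) \<and>
     (\<forall>y. is_ode_sol lam q y \<longrightarrow> (\<exists>a b. \<forall>t\<in>{0..1}. y t = a * u t + b * v t))"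

definition is_phase_function :: "real \<Rightarrow> (real \<Rightarrow> real) \<Rightarrow> (real \<Rightarrow> real) \<Rightarrow> bool" where
  "is_phase_function lam q \<alpha> \<longleftrightarrow>
     is_sol_basis lam q (\<lambda>t. cos (\<alpha> t) / sqrt \<bar>deriv \<alpha> t\<bar>) (\<lambda>t. sin (\<alpha> t) / sqrt \<bar>deriv \<alpha> t\<bar>)"

end

theory Submission
  imports Defs
begin

(*
  Write \<delta> = T\<sigma>.  Splitting sin(2\<lambda>|x - y|) at y = x expresses \<delta> through the
  cumulative integrals of cos(2\<lambda>y)\<sigma>(y) and sin(2\<lambda>y)\<sigma>(y); differentiating twice gives
  \<delta>'' = \<sigma> - 4\<lambda>\<^sup>2\<delta>, so \<delta> is C\<^sup>2 and the fixed-point equation \<sigma> = S[\<delta>] + p becomes (1).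
  Part (2) is the chain rule for \<delta>(x(t)) with x' = \<surd>q, together with the computation of
  p(x(t)) = 2{t,x} from the derivatives of the inverse map (inverse function theorem).
  For (3), \<alpha>' = \<lambda>\<surd>q e^{\<delta>~/2} > 0, and Kummer's equation for \<alpha> is an algebraic
  consequence of (2).  Finally (4): any \<alpha> with \<alpha>' > 0 satisfying Kummer's equation gives the
  solutions cos(\<alpha> - c)/\<surd>\<alpha>' of y'' + \<lambda>\<^sup>2qy = 0 (for c = 0 and c = \<pi>/2), whose Wronskian
  is 1; and two solutions with Wronskian identically 1 form a basis of the solution space.
*)

section \<open>Functions of class C^k given by explicit derivatives\<close>

lemma Ck_from_derivatives:
  fixes F :: "nat \<Rightarrow> real \<Rightarrow> real"
  assumes F0: "F 0 = f"
    and dF: "\<And>j x. j < k \<Longrightarrow> (F j has_real_derivative F (Suc j) x) (at x)"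
    and cont: "continuous_on UNIV (F k)"
  shows "Ck k f" and "\<And>j. j \<le> k \<Longrightarrow> (deriv ^^ j) f = F j"
proof -
  show iter: "(deriv ^^ j) f = F j" if "j \<le> k" for j
    using that
  proof (induction j)
    case 0
    then show ?case by (simp add: F0)
  next
    case (Suc j)
    then show ?case by (auto intro!: ext DERIV_imp_deriv dF)
  qed
  show "Ck k f"
    unfolding Ck_def
    using dF cont by (auto simp: iter real_differentiable_def)
qed

lemma Ck2_intro:
  assumes "\<And>x. (f has_real_derivative f1 x) (at x)" and "\<And>x. (f1 has_real_derivative f2 x) (at x)"
    and "continuous_on UNIV f2"
  shows "Ck 2 f" "deriv f = f1" "deriv (deriv f) = f2"
proof -
  define F where "F = (\<lambda>j::nat. if j = 0 then f else if j = 1 then f1 else f2)"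
  have dF: "(F j has_real_derivative F (Suc j) x) (at x)" if "j < 2" for j x
    using that assms by (auto simp: F_def less_2_cases_iff)
  note C = Ck_from_derivatives[of F f 2, OF _ dF]
  show "Ck 2 f" using C assms(3) by (simp add: F_def)
  show "deriv f = f1" using C(2)[of 1] assms(3) by (simp add: F_def)
  show "deriv (deriv f) = f2" using C(2)[of 2] assms(3) by (simp add: F_def numeral_2_eq_2)
qed

lemma Ck3_intro:
  assumes "\<And>x. (f has_real_derivative f1 x) (at x)" and "\<And>x. (f1 has_real_derivative f2 x) (at x)"
    and "\<And>x. (f2 has_real_derivative f3 x) (at x)" and "continuous_on UNIV f3"
  shows "Ck 3 f" "deriv f = f1" "deriv (deriv f) = f2" "deriv (deriv (deriv f)) = f3"
proof -
  define F where "F = (\<lambda>j::nat. if j = 0 then f else if j = 1 then f1 else if j = 2 then f2 else f3)"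
  have dF: "(F j has_real_derivative F (Suc j) x) (at x)" if "j < 3" for j x
  proof -
    have "j = 0 \<or> j = 1 \<or> j = 2" using that by auto
    then show ?thesis using assms by (auto simp: F_def)
  qed
  note C = Ck_from_derivatives[of F f 3, OF _ dF]
  show "Ck 3 f" using C assms(4) by (simp add: F_def)
  show "deriv f = f1" using C(2)[of 1] assms(4) by (simp add: F_def)
  show "deriv (deriv f) = f2" using C(2)[of 2] assms(4) by (simp add: F_def numeral_2_eq_2)
  show "deriv (deriv (deriv f)) = f3" using C(2)[of 3] assms(4) by (simp add: F_def numeral_3_eq_3)
qed

section \<open>Derivatives of indefinite integrals\<close>

lemma integrable_bounded_continuous_mult:
  fixes f g :: "real \<Rightarrow> real"
  assumes "integrable lborel f" "continuous_on UNIV g" "\<And>y. \<bar>g y\<bar> \<le> 1"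
  shows "integrable lborel (\<lambda>y. g y * f y)"
proof (rule Bochner_Integration.integrable_bound[OF assms(1)])
  have "g \<in> borel_measurable lborel" using assms(2) by (simp add: borel_measurable_continuous_onI)
  moreover have "f \<in> borel_measurable lborel" using assms(1) by simp
  ultimately show "(\<lambda>y. g y * f y) \<in> borel_measurable lborel" by measurable
  show "AE x in lborel. norm (g x * f x) \<le> norm (f x)"
    using assms(3) by (auto simp: abs_mult intro!: mult_left_le_one_le)
qed

lemma cumulative_integral_has_derivative:
  fixes f :: "real \<Rightarrow> real"
  assumes fi: "integrable lborel f" and fc: "continuous_on UNIV f"
  shows "((\<lambda>x. \<integral>y. indicator {..x} y * f y \<partial>lborel) has_real_derivative f x0) (at x0)"
proof -
  define a where "a = x0 - 1"
  have split: "(\<integral>y. indicator {..x} y * f y \<partial>lborel) =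
      (\<integral>y. indicator {..<a} y * f y \<partial>lborel) + integral {a..x} f" if "x \<in> {a<..}" for x
  proof -
    have si: "set_integrable lborel {a..x} f"
      by (rule borel_integrable_atLeastAtMost') (use fc continuous_on_subset in blast)
    have "(\<integral>y. indicator {..x} y * f y \<partial>lborel) =
        (\<integral>y. indicator {..<a} y * f y + indicator {a..x} y * f y \<partial>lborel)"
      using that by (intro Bochner_Integration.integral_cong) (auto split: split_indicator)
    also have "\<dots> = (\<integral>y. indicator {..<a} y * f y \<partial>lborel) + (\<integral>y. indicator {a..x} y * f y \<partial>lborel)"
      using si fi integrable_mult_indicator[of "{..<a}" lborel f] unfolding set_integrable_def
      by (intro Bochner_Integration.integral_add) auto
    also have "(\<integral>y. indicator {a..x} y * f y \<partial>lborel) = integral {a..x} f"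
      using set_borel_integral_eq_integral(2)[OF si] by (simp add: set_lebesgue_integral_def)
    finally show ?thesis .
  qed
  have "((\<lambda>x. integral {a..x} f) has_real_derivative f x0) (at x0 within {a..x0 + 1})"
    by (rule integral_has_real_derivative) (auto simp: a_def intro: continuous_on_subset[OF fc])
  then have "((\<lambda>x. integral {a..x} f) has_real_derivative f x0) (at x0)"
    by (simp add: at_within_Icc_at a_def)
  then have "((\<lambda>x. (\<integral>y. indicator {..<a} y * f y \<partial>lborel) + integral {a..x} f)
      has_real_derivative f x0) (at x0)"
    by (auto intro!: derivative_eq_intros)
  then show ?thesis
    by (rule has_field_derivative_transform_within_open[where S="{a<..}"]) (auto simp: a_def split)
qed

lemma sint_has_derivative:
  fixes f :: "real \<Rightarrow> real"
  assumes fc: "continuous_on UNIV f"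
  shows "((\<lambda>t. sint 0 t f) has_real_derivative f t0) (at t0)"
proof -
  define a where "a = min 0 t0 - 1"
  have ii: "f integrable_on {u..v}" for u v
    by (rule integrable_continuous_real) (rule continuous_on_subset[OF fc], simp)
  have split: "sint 0 t f = integral {a..t} f - integral {a..0} f" if "t \<in> {a<..}" for t
  proof (cases "0 \<le> t")
    case True
    have "integral {a..0} f + integral {0..t} f = integral {a..t} f"
      by (rule Henstock_Kurzweil_Integration.integral_combine) (use True that in \<open>auto simp: a_def intro: ii\<close>)
    then show ?thesis using True by (simp add: sint_def)
  next
    case False
    have "integral {a..t} f + integral {t..0} f = integral {a..0} f"
      by (rule Henstock_Kurzweil_Integration.integral_combine) (use False that in \<open>auto simp: a_def intro: ii\<close>)
    then show ?thesis using False by (simp add: sint_def)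
  qed
  have "((\<lambda>t. integral {a..t} f) has_real_derivative f t0) (at t0 within {a..max 0 t0 + 1})"
    by (rule integral_has_real_derivative) (auto simp: a_def intro: continuous_on_subset[OF fc])
  then have "((\<lambda>t. integral {a..t} f) has_real_derivative f t0) (at t0)"
    by (simp add: at_within_Icc_at a_def)
  then have "((\<lambda>t. integral {a..t} f - integral {a..0} f) has_real_derivative f t0) (at t0)"
    by (auto intro!: derivative_eq_intros)
  then show ?thesis
    by (rule has_field_derivative_transform_within_open[where S="{a<..}"]) (auto simp: a_def split)
qed

section \<open>The operator T\<close>

text \<open>Splitting \<open>sin(2\<lambda>|x - y|)\<close> at \<open>y = x\<close> writes \<open>T\<sigma>\<close> through the cumulative integrals of
  \<open>c(y) = cos(2\<lambda>y)\<sigma>(y)\<close> and \<open>s(y) = sin(2\<lambda>y)\<sigma>(y)\<close>.\<close>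
lemma Top_split:
  fixes lam :: real and \<sigma> :: "real \<Rightarrow> real"
  assumes si: "integrable lborel \<sigma>"
  defines "c \<equiv> \<lambda>y. cos (2*lam*y) * \<sigma> y" and "s \<equiv> \<lambda>y. sin (2*lam*y) * \<sigma> y"
  shows "Top lam \<sigma> x =
     (sin (2*lam*x) * (2 * (\<integral>y. indicator {..x} y * c y \<partial>lborel) - (\<integral>y. c y \<partial>lborel))
      - cos (2*lam*x) * (2 * (\<integral>y. indicator {..x} y * s y \<partial>lborel) - (\<integral>y. s y \<partial>lborel))) / (4*lam)"
proof -
  have ic: "integrable lborel c" unfolding c_def
    by (rule integrable_bounded_continuous_mult[OF si]) (auto intro!: continuous_intros)
  have iss: "integrable lborel s" unfolding s_def
    by (rule integrable_bounded_continuous_mult[OF si]) (auto intro!: continuous_intros)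
  have ic2: "integrable lborel (\<lambda>y. indicator {..x} y * c y)"
    using integrable_mult_indicator[OF _ ic] by simp
  have is2: "integrable lborel (\<lambda>y. indicator {..x} y * s y)"
    using integrable_mult_indicator[OF _ iss] by simp
  have pointwise: "sin (2 * lam * \<bar>x - y\<bar>) * \<sigma> y =
     2 * (sin (2*lam*x) * (indicator {..x} y * c y)) - 2 * (cos (2*lam*x) * (indicator {..x} y * s y))
     - (sin (2*lam*x) * c y) + cos (2*lam*x) * s y" for y
  proof (cases "y \<le> x")
    case True
    then have "sin (2 * lam * \<bar>x - y\<bar>) = sin (2*lam*x - 2*lam*y)" by (simp add: right_diff_distrib)
    then show ?thesis using True by (simp add: sin_diff c_def s_def algebra_simps)
  next
    case False
    then have "sin (2 * lam * \<bar>x - y\<bar>) = - sin (2*lam*x - 2*lam*y)"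
      by (simp add: right_diff_distrib abs_if) (metis minus_diff_eq sin_minus)
    then show ?thesis using False by (simp add: sin_diff c_def s_def algebra_simps)
  qed
  have "(\<integral>y. sin (2 * lam * \<bar>x - y\<bar>) * \<sigma> y \<partial>lborel) =
     (\<integral>y. 2 * (sin (2*lam*x) * (indicator {..x} y * c y)) - 2 * (cos (2*lam*x) * (indicator {..x} y * s y))
     - (sin (2*lam*x) * c y) + cos (2*lam*x) * s y \<partial>lborel)"
    by (simp only: pointwise)
  also have "\<dots> = 2 * (sin (2*lam*x) * (\<integral>y. indicator {..x} y * c y \<partial>lborel))
     - 2 * (cos (2*lam*x) * (\<integral>y. indicator {..x} y * s y \<partial>lborel))
     - (sin (2*lam*x) * (\<integral>y. c y \<partial>lborel)) + cos (2*lam*x) * (\<integral>y. s y \<partial>lborel)"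
    using ic iss ic2 is2 by simp
  finally show ?thesis unfolding Top_def by (simp add: algebra_simps)
qed

text \<open>\<open>T\<sigma>\<close> is the solution of \<open>\<delta>'' + 4\<lambda>\<^sup>2\<delta> = \<sigma>\<close> given by variation of constants: it is twice
  differentiable with \<open>(T\<sigma>)'' = \<sigma> - 4\<lambda>\<^sup>2 T\<sigma>\<close>.\<close>
lemma Top_second_derivative:
  fixes lam :: real and \<sigma> :: "real \<Rightarrow> real"
  assumes lam: "lam > 0" and si: "integrable lborel \<sigma>" and sc: "continuous_on UNIV \<sigma>"
  obtains d1 where "\<And>x. (Top lam \<sigma> has_real_derivative d1 x) (at x)"
    and "\<And>x. (d1 has_real_derivative (\<sigma> x - 4*lam^2 * Top lam \<sigma> x)) (at x)"
proof -
  define c where "c = (\<lambda>y. cos (2*lam*y) * \<sigma> y)"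
  define s where "s = (\<lambda>y. sin (2*lam*y) * \<sigma> y)"
  define A where "A = (\<lambda>x. \<integral>y. indicator {..x} y * c y \<partial>lborel)"
  define B where "B = (\<lambda>x. \<integral>y. indicator {..x} y * s y \<partial>lborel)"
  define Ct where "Ct = (\<integral>y. c y \<partial>lborel)"
  define St where "St = (\<integral>y. s y \<partial>lborel)"
  have T: "Top lam \<sigma> = (\<lambda>x. (sin (2*lam*x) * (2 * A x - Ct) - cos (2*lam*x) * (2 * B x - St)) / (4*lam))"
    using Top_split[OF si] unfolding A_def B_def Ct_def St_def c_def s_def by blast
  have dA: "(A has_real_derivative c x) (at x)" for x unfolding A_def
    by (rule cumulative_integral_has_derivative)
       (auto simp: c_def intro!: integrable_bounded_continuous_mult si continuous_intros sc)
  have dB: "(B has_real_derivative s x) (at x)" for x unfolding B_def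
    by (rule cumulative_integral_has_derivative)
       (auto simp: s_def intro!: integrable_bounded_continuous_mult si continuous_intros sc)
  define d1 where "d1 = (\<lambda>x. (cos (2*lam*x) * (2 * A x - Ct) + sin (2*lam*x) * (2 * B x - St)) / 2)"
  have pythagoras: "a * (b * (16 * (cos t * cos t))) + a * (b * (16 * (sin t * sin t))) = a * (b * 16)"
    for a b t :: real
    using sin_cos_squared_add3[of t] by algebra
  show thesis
  proof
    show "(Top lam \<sigma> has_real_derivative d1 x) (at x)" for x
      unfolding T
      apply (rule derivative_eq_intros refl dA dB | simp)+
      using lam by (auto simp: d1_def c_def s_def field_simps)
    show "(d1 has_real_derivative (\<sigma> x - 4*lam^2 * Top lam \<sigma> x)) (at x)" for x
      unfolding d1_def
      apply (rule derivative_eq_intros refl dA dB | simp)+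
      using lam by (auto simp: T c_def s_def field_simps power2_eq_square pythagoras)
  qed
qed

section \<open>The change of variables x = x(t)\<close>

locale positive_potential =
  fixes q :: "real \<Rightarrow> real"
  assumes q_smooth: "smooth_fun q" and q_pos: "\<And>t. q t > 0" and x_onto: "surj (xmap q)"
begin

definition "r = (\<lambda>t. sqrt (q t))"
definition "tinv = inv (xmap q)"

text \<open>The function \<open>p~(t)\<close> of part (2), which will turn out to be \<open>p(x(t))\<close>.\<close>
definition "ptilde = (\<lambda>t. (1 / q t) * (5/4 * (deriv q t / q t)^2 - deriv (deriv q) t / q t))"

text \<open>Smoothness of \<open>q\<close> is used only up to order three.\<close>
lemma q_has_derivatives:
  "(q has_real_derivative deriv q t) (at t)"
  "(deriv q has_real_derivative deriv (deriv q) t) (at t)"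
  "(deriv (deriv q) has_real_derivative deriv (deriv (deriv q)) t) (at t)"
proof -
  have "(deriv ^^ j) q differentiable at t" if "j < 3" for j
    using q_smooth that unfolding smooth_fun_def Ck_def by blast
  from this[of 0] this[of 1] this[of 2] show
    "(q has_real_derivative deriv q t) (at t)"
    "(deriv q has_real_derivative deriv (deriv q) t) (at t)"
    "(deriv (deriv q) has_real_derivative deriv (deriv (deriv q)) t) (at t)"
    by (simp_all add: DERIV_deriv_iff_real_differentiable numeral_2_eq_2)
qed

lemma q_continuous:
  "continuous_on UNIV q" "continuous_on UNIV (deriv q)" "continuous_on UNIV (deriv (deriv q))"
  using q_has_derivatives by (meson DERIV_isCont continuous_at_imp_continuous_on)+

lemma r_pos: "r t > 0"
  using q_pos by (simp add: r_def)

lemma r_squared: "r t ^ 2 = q t"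
  using q_pos[of t] by (simp add: r_def less_imp_le)

lemma r_mult_self: "r t * r t = q t"
  using r_squared[of t] by (simp add: power2_eq_square)

lemma r_has_derivative: "(r has_real_derivative deriv q t / (2 * r t)) (at t)"
proof -
  have "((\<lambda>t. sqrt (q t)) has_real_derivative inverse (sqrt (q t)) / 2 * deriv q t) (at t)"
    by (rule DERIV_chain2[OF DERIV_real_sqrt[OF q_pos] q_has_derivatives(1)])
  then show ?thesis by (simp add: r_def field_simps)
qed

lemma r_continuous: "continuous_on UNIV r"
  using r_has_derivative by (meson DERIV_isCont continuous_at_imp_continuous_on)

lemma xmap_has_derivative: "(xmap q has_real_derivative r t) (at t)"
  unfolding xmap_def r_def
  by (rule sint_has_derivative) (auto intro!: continuous_intros q_continuous)

lemma xmap_continuous: "continuous_on UNIV (xmap q)"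
  using xmap_has_derivative by (meson DERIV_isCont continuous_at_imp_continuous_on)

text \<open>\<open>x\<close> is strictly increasing since \<open>x' = r > 0\<close>; with surjectivity it is a bijection.\<close>
lemma xmap_inj: "inj (xmap q)"
proof -
  have "strict_mono (xmap q)"
  proof (rule strict_monoI)
    fix a b :: real
    assume "a < b"
    then show "xmap q a < xmap q b"
      using xmap_has_derivative r_pos by (intro DERIV_pos_imp_increasing[of a b "xmap q"]) blast+
  qed
  then show ?thesis by (rule strict_mono_imp_inj_on)
qed

lemma tinv_xmap: "tinv (xmap q t) = t"
  unfolding tinv_def using xmap_inj by simp

lemma xmap_tinv: "xmap q (tinv x) = x"
  unfolding tinv_def using x_onto by (simp add: surj_f_inv_f)

lemma tinv_has_derivative: "(tinv has_real_derivative 1 / r (tinv x)) (at x)"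
proof -
  have "isCont tinv (xmap q (tinv x))"
    by (rule isCont_inverse_function[where d=1])
       (auto simp: tinv_xmap intro: DERIV_isCont[OF xmap_has_derivative])
  then have cont: "isCont tinv x" by (simp add: xmap_tinv)
  have "(tinv has_real_derivative inverse (r (tinv x))) (at x)"
    by (rule DERIV_inverse_function[where a="x-1" and b="x+1" and f="xmap q"])
       (use xmap_has_derivative r_pos[of "tinv x"] cont xmap_tinv in \<open>auto\<close>)
  then show ?thesis by (simp add: divide_inverse)
qed

lemma comp_tinv_has_derivative:
  "(F has_real_derivative D) (at (tinv x)) \<Longrightarrow>
   ((\<lambda>x. F (tinv x)) has_real_derivative D / r (tinv x)) (at x)"
  using DERIV_chain2[of F D tinv x "1 / r (tinv x)"] tinv_has_derivative by simp

text \<open>The first three derivatives of \<open>tinv\<close>, expressed in the variable \<open>t\<close>.\<close>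
definition "tinv_d1 = (\<lambda>t. 1 / r t)"
definition "tinv_d2 = (\<lambda>t. - deriv q t / (2 * r t ^ 4))"
definition "tinv_d3 = (\<lambda>t. (- deriv (deriv q) t / (2 * r t ^ 4) + deriv q t ^ 2 / r t ^ 6) / r t)"

lemma deriv_tinv: "deriv tinv = (\<lambda>x. tinv_d1 (tinv x))"
  using tinv_has_derivative by (auto intro!: ext DERIV_imp_deriv simp: tinv_d1_def)

lemma deriv2_tinv: "deriv (\<lambda>x. tinv_d1 (tinv x)) = (\<lambda>x. tinv_d2 (tinv x))"
proof (rule ext)
  fix x
  have d: "(tinv_d1 has_real_derivative tinv_d2 t * r t) (at t)" for t
    unfolding tinv_d1_def tinv_d2_def
    apply (rule derivative_eq_intros r_has_derivative refl | simp)+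
    using r_pos[of t] by (auto simp: field_simps eval_nat_numeral)
  then show "deriv (\<lambda>x. tinv_d1 (tinv x)) x = tinv_d2 (tinv x)"
    using comp_tinv_has_derivative[OF d[of "tinv x"]] r_pos[of "tinv x"] by (intro DERIV_imp_deriv) simp
qed

lemma deriv3_tinv: "deriv (\<lambda>x. tinv_d2 (tinv x)) = (\<lambda>x. tinv_d3 (tinv x))"
proof (rule ext)
  fix x
  have d: "(tinv_d2 has_real_derivative tinv_d3 t * r t) (at t)" for t
    unfolding tinv_d2_def tinv_d3_def
    apply (rule derivative_eq_intros r_has_derivative q_has_derivatives refl | simp)+
    using r_pos[of t] by (auto simp: field_simps eval_nat_numeral)
  then show "deriv (\<lambda>x. tinv_d2 (tinv x)) x = tinv_d3 (tinv x)"
    using comp_tinv_has_derivative[OF d[of "tinv x"]] r_pos[of "tinv x"] by (intro DERIV_imp_deriv) simp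
qed

lemma pfun_xmap: "pfun q (xmap q t) = ptilde t"
proof -
  have "pfun q (xmap q t) = 2 * (tinv_d3 t / tinv_d1 t - 3/2 * (tinv_d2 t / tinv_d1 t)^2)"
    unfolding pfun_def schwarzian_def tinv_def[symmetric] deriv_tinv deriv2_tinv deriv3_tinv tinv_xmap ..
  also have "\<dots> = ptilde t"
    using r_pos[of t] unfolding tinv_d1_def tinv_d2_def tinv_d3_def ptilde_def
    by (simp add: r_squared[symmetric] field_simps)
  finally show ?thesis .
qed

lemma transformed_equation:
  fixes \<delta> d1 d2 :: "real \<Rightarrow> real"
  assumes d\<delta>: "\<And>x. (\<delta> has_real_derivative d1 x) (at x)"
    and dd1: "\<And>x. (d1 has_real_derivative d2 x) (at x)"
    and cd2: "continuous_on UNIV d2"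
    and eq: "\<And>x. d2 x - 1/4 * (d1 x)^2 + 4 * lam^2 * (exp (\<delta> x) - 1) = pfun q x"
  defines "D1 \<equiv> \<lambda>t. d1 (xmap q t) * r t"
    and "D2 \<equiv> \<lambda>t. d2 (xmap q t) * q t + d1 (xmap q t) * (deriv q t / (2 * r t))"
  shows "\<And>t. ((\<lambda>t. \<delta> (xmap q t)) has_real_derivative D1 t) (at t)"
    and "\<And>t. (D1 has_real_derivative D2 t) (at t)"
    and "continuous_on UNIV D2"
    and "\<And>t. D2 t - deriv q t / (2 * q t) * D1 t - 1/4 * (D1 t)^2
              + 4 * lam^2 * q t * (exp (\<delta> (xmap q t)) - 1) = q t * ptilde t"
proof -
  show "((\<lambda>t. \<delta> (xmap q t)) has_real_derivative D1 t) (at t)" for t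
    unfolding D1_def by (rule DERIV_chain2[OF d\<delta> xmap_has_derivative])
  show "(D1 has_real_derivative D2 t) (at t)" for t
    unfolding D1_def D2_def
    by (rule derivative_eq_intros DERIV_chain2[OF dd1 xmap_has_derivative] r_has_derivative refl | simp)+
       (simp add: r_mult_self algebra_simps)
  have cd1: "continuous_on UNIV d1"
    using dd1 by (meson DERIV_isCont continuous_at_imp_continuous_on)
  have comp: "continuous_on UNIV (\<lambda>t. f (xmap q t))" if "continuous_on UNIV f" for f
    by (rule continuous_on_compose2[OF that xmap_continuous]) auto
  show "continuous_on UNIV D2" unfolding D2_def
    using r_pos
    by (auto intro!: continuous_intros comp cd1 cd2 q_continuous r_continuous simp: less_imp_neq[symmetric])
  show "D2 t - deriv q t / (2 * q t) * D1 t - 1/4 * (D1 t)^2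
        + 4 * lam^2 * q t * (exp (\<delta> (xmap q t)) - 1) = q t * ptilde t" for t
  proof -
    have "D2 t - deriv q t / (2 * q t) * D1 t - 1/4 * (D1 t)^2 + 4 * lam^2 * q t * (exp (\<delta> (xmap q t)) - 1)
        = q t * (d2 (xmap q t) - 1/4 * (d1 (xmap q t))^2 + 4 * lam^2 * (exp (\<delta> (xmap q t)) - 1))"
      unfolding D1_def D2_def using r_pos[of t] q_pos[of t]
      by (simp add: field_simps power2_eq_square r_mult_self[symmetric])
    also have "\<dots> = q t * pfun q (xmap q t)" by (simp only: eq)
    finally show ?thesis by (simp only: pfun_xmap)
  qed
qed

text \<open>Part (3) from part (2): \<open>\<alpha>(t) = \<lambda>\<integral>\<^sub>0\<^sup>t \<surd>q e^{\<delta>~/2}\<close> has the positive derivative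
  \<open>w = \<lambda> r e^{\<delta>~/2}\<close>, is C^3 with the derivatives \<open>w, W1, W2\<close>, and satisfies Kummer's equation
  (an algebraic identity once \<open>\<delta>~''\<close> is eliminated by the transformed equation).\<close>
lemma alpha_kummer:
  fixes \<delta> D1 D2 :: "real \<Rightarrow> real" and lam :: real
  assumes lam: "lam > 0"
    and dt1: "\<And>t. ((\<lambda>t. \<delta> (xmap q t)) has_real_derivative D1 t) (at t)"
    and dt2: "\<And>t. (D1 has_real_derivative D2 t) (at t)"
    and cD2: "continuous_on UNIV D2"
    and eq: "\<And>t. D2 t - deriv q t / (2 * q t) * D1 t - 1/4 * (D1 t)^2
              + 4 * lam^2 * q t * (exp (\<delta> (xmap q t)) - 1) = q t * ptilde t"
  defines "\<alpha> \<equiv> \<lambda>t. lam * sint 0 t (\<lambda>u. sqrt (q u) * exp (\<delta> (xmap q u) / 2))"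
    and "E \<equiv> \<lambda>t. exp (\<delta> (xmap q t) / 2)"
    and "R1 \<equiv> \<lambda>t. deriv q t / (2 * r t)"
    and "R2 \<equiv> \<lambda>t. deriv (deriv q) t / (2 * r t) - (deriv q t)^2 / (4 * r t ^ 3)"
  defines "w \<equiv> \<lambda>t. lam * (r t * E t)"
    and "W1 \<equiv> \<lambda>t. lam * (R1 t * E t + r t * (E t * (D1 t / 2)))"
    and "W2 \<equiv> \<lambda>t. lam * (R2 t * E t + R1 t * (E t * (D1 t / 2))
                     + (R1 t * (E t * (D1 t / 2)) + r t * ((E t * (D1 t / 2)) * (D1 t / 2) + E t * (D2 t / 2))))"
  shows "\<And>t. (\<alpha> has_real_derivative w t) (at t)"
    and "\<And>t. (w has_real_derivative W1 t) (at t)"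
    and "\<And>t. (W1 has_real_derivative W2 t) (at t)"
    and "continuous_on UNIV W2"
    and "\<And>t. w t > 0"
    and "\<And>t. (w t)^2 = lam^2 * q t - 1/2 * (W2 t / w t) + 3/4 * (W1 t / w t)^2"
proof -
  have c\<delta>: "continuous_on UNIV (\<lambda>t. \<delta> (xmap q t))"
    using dt1 by (meson DERIV_isCont continuous_at_imp_continuous_on)
  have cD1: "continuous_on UNIV D1"
    using dt2 by (meson DERIV_isCont continuous_at_imp_continuous_on)
  have "((\<lambda>t. sint 0 t (\<lambda>u. sqrt (q u) * exp (\<delta> (xmap q u) / 2))) has_real_derivative
          sqrt (q t) * exp (\<delta> (xmap q t) / 2)) (at t)" for t
    by (rule sint_has_derivative) (auto intro!: continuous_intros q_continuous c\<delta>)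
  then show "(\<alpha> has_real_derivative w t) (at t)" for t
    unfolding \<alpha>_def w_def r_def E_def by (auto intro!: derivative_eq_intros)
  have dR1: "(R1 has_real_derivative R2 t) (at t)" for t
    unfolding R1_def R2_def
    apply (rule derivative_eq_intros q_has_derivatives r_has_derivative refl | simp)+
    using r_pos[of t] by (auto simp: field_simps eval_nat_numeral)
  have dE: "(E has_real_derivative E t * (D1 t / 2)) (at t)" for t
    unfolding E_def by (rule derivative_eq_intros dt1 refl | simp)+
  have dr: "(r has_real_derivative R1 t) (at t)" for t
    unfolding R1_def by (rule r_has_derivative)
  have dED: "((\<lambda>t. E t * (D1 t / 2)) has_real_derivative
      (E t * (D1 t / 2)) * (D1 t / 2) + E t * (D2 t / 2)) (at t)" for t
    using DERIV_mult[OF dE DERIV_cdivide[OF dt2, of 2]] by (simp add: algebra_simps)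
  show "(w has_real_derivative W1 t) (at t)" for t
    unfolding w_def W1_def
    using DERIV_cmult[OF DERIV_mult[OF dr dE], of lam] by (simp add: algebra_simps)
  show "(W1 has_real_derivative W2 t) (at t)" for t
    unfolding W1_def W2_def
    using DERIV_cmult[OF DERIV_add[OF DERIV_mult[OF dR1 dE] DERIV_mult[OF dr dED]], of lam]
    by (simp add: algebra_simps)
  have cE: "continuous_on UNIV E" unfolding E_def by (auto intro!: continuous_intros c\<delta>)
  show "continuous_on UNIV W2" unfolding W2_def R1_def R2_def
    using r_pos
    by (auto intro!: continuous_intros cD1 cD2 cE q_continuous r_continuous simp: less_imp_neq[symmetric])
  show "w t > 0" for t unfolding w_def E_def using lam r_pos[of t] by simp
  show "(w t)^2 = lam^2 * q t - 1/2 * (W2 t / w t) + 3/4 * (W1 t / w t)^2" for t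
  proof -
    define e where "e = E t"
    have e_pos: "e > 0" unfolding e_def E_def by simp
    have exp_e: "exp (\<delta> (xmap q t)) = e * e" unfolding e_def E_def by (simp flip: exp_add)
    have D2_eq: "D2 t = q t * ptilde t + deriv q t / (2 * q t) * D1 t + 1/4 * (D1 t)^2
        - 4 * lam^2 * q t * (exp (\<delta> (xmap q t)) - 1)"
      using eq[of t] by simp
    show ?thesis
      unfolding w_def W1_def W2_def e_def[symmetric] D2_eq exp_e R1_def R2_def ptilde_def
      using r_pos[of t] e_pos lam
      by (simp add: r_squared[symmetric] field_simps) algebra
  qed
qed

end

section \<open>Phase functions from Kummer's equation\<close>

lemma kummer_shifted_solution:
  fixes \<alpha> w w1 w2 q :: "real \<Rightarrow> real" and lam c :: real
  assumes d\<alpha>: "\<And>t. (\<alpha> has_real_derivative w t) (at t)"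
    and dw: "\<And>t. (w has_real_derivative w1 t) (at t)"
    and dw1: "\<And>t. (w1 has_real_derivative w2 t) (at t)"
    and wpos: "\<And>t. w t > 0"
    and kummer: "\<And>t. (w t)^2 = lam^2 * q t - 1/2 * (w2 t / w t) + 3/4 * (w1 t / w t)^2"
  defines "y \<equiv> \<lambda>t. cos (\<alpha> t - c) / sqrt (w t)"
    and "y1 \<equiv> \<lambda>t. - (sin (\<alpha> t - c) * sqrt (w t) + cos (\<alpha> t - c) * (w1 t / (2 * sqrt (w t) ^ 3)))"
  shows "(y has_real_derivative y1 t) (at t)"
    and "(y1 has_real_derivative - (lam^2 * q t * y t)) (at t)"
proof -
  define R where "R = (\<lambda>t. sqrt (w t))"
  have R_pos: "R t > 0" for t using wpos[of t] by (simp add: R_def)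
  have R_nz: "R t \<noteq> 0" for t using R_pos[of t] by simp
  have w_eq: "w t = R t ^ 2" for t using wpos[of t] by (simp add: R_def less_imp_le)
  have dR: "(R has_real_derivative w1 t / (2 * R t)) (at t)" for t
  proof -
    have "((\<lambda>t. sqrt (w t)) has_real_derivative inverse (sqrt (w t)) / 2 * w1 t) (at t)"
      by (rule DERIV_chain2[OF DERIV_real_sqrt[OF wpos] dw])
    then show ?thesis by (simp add: R_def field_simps)
  qed
  have w2_eq: "w2 t = 2 * R t ^ 2 * (lam^2 * q t - R t ^ 4 + 3/4 * (w1 t / R t ^ 2)^2)" for t
    using kummer[of t] R_pos[of t] unfolding w_eq by (simp add: field_simps)
  have y_R: "y = (\<lambda>t. cos (\<alpha> t - c) / R t)"
    by (simp add: y_def R_def)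
  have y1_R: "y1 = (\<lambda>t. - (sin (\<alpha> t - c) * R t + cos (\<alpha> t - c) * (w1 t / (2 * R t ^ 3))))"
    by (simp add: y1_def R_def)
  show "(y has_real_derivative y1 t) (at t)"
    unfolding y_R y1_R
    apply (rule derivative_eq_intros d\<alpha> dR refl | simp add: R_nz)+
    using R_pos[of t] by (simp add: w_eq field_simps eval_nat_numeral)
  show "(y1 has_real_derivative - (lam^2 * q t * y t)) (at t)"
    unfolding y_R y1_R
    apply (rule derivative_eq_intros d\<alpha> dR dw1 refl | simp add: R_nz)+
    using R_pos[of t] by (simp add: w_eq w2_eq field_simps eval_nat_numeral)
qed

lemma wronskian_constant:
  fixes y y' y'' f f1 q :: "real \<Rightarrow> real" and lam :: real
  assumes y: "\<And>t. t \<in> {0..1} \<Longrightarrow> (y has_real_derivative y' t) (at t within {0..1}) \<and>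
        (y' has_real_derivative y'' t) (at t within {0..1}) \<and> y'' t + lam^2 * q t * y t = 0"
    and df: "\<And>t. (f has_real_derivative f1 t) (at t)"
    and df1: "\<And>t. (f1 has_real_derivative - (lam^2 * q t * f t)) (at t)"
  shows "\<exists>c. \<forall>t\<in>{0..1}. y t * f1 t - y' t * f t = c"
proof (rule has_field_derivative_zero_constant)
  fix t :: real assume t: "t \<in> {0..1}"
  have "((\<lambda>t. y t * f1 t - y' t * f t) has_real_derivative
      (y' t * f1 t + - (lam^2 * q t * f t) * y t) - (y'' t * f t + f1 t * y' t)) (at t within {0..1})"
    using y[OF t] has_field_derivative_at_within[OF df] has_field_derivative_at_within[OF df1]
    by (intro DERIV_diff DERIV_mult) auto
  moreover have "(y' t * f1 t + - (lam^2 * q t * f t) * y t) - (y'' t * f t + f1 t * y' t) = 0"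
    using y[OF t] by (simp add: algebra_simps eq_neg_iff_add_eq_0[symmetric])
  ultimately show "((\<lambda>t. y t * f1 t - y' t * f t) has_real_derivative 0) (at t within {0..1})"
    by simp
qed simp

text \<open>Independence: differentiating a vanishing
  combination gives a second one, and the Wronskian makes the 2x2 system nonsingular.
  Spanning: for any solution \<open>y\<close> the Wronskians \<open>W(y,u)\<close>, \<open>W(y,v)\<close> are constants, and
  \<open>y = W(y,v) u - W(y,u) v\<close>.\<close>
lemma wronskian_solution_basis:
  fixes u u1 v v1 q :: "real \<Rightarrow> real" and lam :: real
  assumes du: "\<And>t. (u has_real_derivative u1 t) (at t)"
    and du1: "\<And>t. (u1 has_real_derivative - (lam^2 * q t * u t)) (at t)"
    and dv: "\<And>t. (v has_real_derivative v1 t) (at t)"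
    and dv1: "\<And>t. (v1 has_real_derivative - (lam^2 * q t * v t)) (at t)"
    and wronskian: "\<And>t. u t * v1 t - u1 t * v t = 1"
  shows "is_sol_basis lam q u v"
proof -
  have within: "(f has_real_derivative D) (at t within {0..1})"
    if "(f has_real_derivative D) (at t)" for f D t
    using that by (rule has_field_derivative_at_within)
  have solution: "is_ode_sol lam q f"
    if "\<And>t. (f has_real_derivative f1 t) (at t)"
      and "\<And>t. (f1 has_real_derivative - (lam^2 * q t * f t)) (at t)" for f f1
    unfolding is_ode_sol_def using that by (intro exI[of _ f1] exI) (auto intro!: within)
  have independent: "a = 0 \<and> b = 0" if zero: "\<forall>t\<in>{0..1}. a * u t + b * v t = 0" for a b
  proof -
    have "((\<lambda>t. a * u t + b * v t) has_real_derivative a * u1 t + b * v1 t) (at t within {0..1})"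
      for t using du dv by (intro within derivative_eq_intros) auto
    moreover have "((\<lambda>t. a * u t + b * v t) has_real_derivative 0) (at t within {0..1})"
      if "t \<in> {0..1}" for t
      by (rule has_field_derivative_transform_within[where f="\<lambda>_. 0" and d=1])
         (use zero that in auto)
    moreover have "at t within {0..1} \<noteq> (bot :: real filter)" if "t \<in> {0..1}" for t
      using that by (auto simp: trivial_limit_within islimpt_Icc)
    ultimately have zero': "a * u1 t + b * v1 t = 0" if "t \<in> {0..1}" for t
      using that has_field_derivative_unique by blast
    have "a = v1 0 * (a * u 0 + b * v 0) - v 0 * (a * u1 0 + b * v1 0)"
      "b = u 0 * (a * u1 0 + b * v1 0) - u1 0 * (a * u 0 + b * v 0)"
      using wronskian[of 0] by algebra+
    moreover have "a * u 0 + b * v 0 = 0" "a * u1 0 + b * v1 0 = 0"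
      using zero zero'[of 0] by simp_all
    ultimately show ?thesis by (metis diff_self mult_zero_right)
  qed
  have spanning: "\<exists>a b. \<forall>t\<in>{0..1}. y t = a * u t + b * v t" if Y: "is_ode_sol lam q y" for y
  proof -
    obtain y' y'' where y: "\<And>t. t \<in> {0..1} \<Longrightarrow> (y has_real_derivative y' t) (at t within {0..1}) \<and>
        (y' has_real_derivative y'' t) (at t within {0..1}) \<and> y'' t + lam^2 * q t * y t = 0"
      using Y unfolding is_ode_sol_def by blast
    obtain c1 where c1: "\<And>t. t \<in> {0..1} \<Longrightarrow> y t * u1 t - y' t * u t = c1"
      using wronskian_constant[OF y du du1] by blast
    obtain c2 where c2: "\<And>t. t \<in> {0..1} \<Longrightarrow> y t * v1 t - y' t * v t = c2"
      using wronskian_constant[OF y dv dv1] by blast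
    have "y t = c2 * u t + (- c1) * v t" if t: "t \<in> {0..1}" for t
    proof -
      have "c2 * u t + (- c1) * v t = (y t * v1 t - y' t * v t) * u t - (y t * u1 t - y' t * u t) * v t"
        using c1[OF t] c2[OF t] by simp
      also have "\<dots> = y t * (u t * v1 t - u1 t * v t)" by (simp add: algebra_simps)
      finally show ?thesis using wronskian[of t] by simp
    qed
    then show ?thesis by blast
  qed
  show ?thesis
    unfolding is_sol_basis_def
    using solution[OF du du1] solution[OF dv dv1] independent spanning by blast
qed

text \<open>Part (4) from part (3): a function with positive derivative satisfying Kummer's equation
  is a phase function, since \<open>cos \<alpha>/\<surd>\<alpha>'\<close> and \<open>sin \<alpha>/\<surd>\<alpha>' = cos(\<alpha> - \<pi>/2)/\<surd>\<alpha>'\<close> are solutions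
  with Wronskian \<open>cos\<^sup>2\<alpha> + sin\<^sup>2\<alpha> = 1\<close>.\<close>
lemma kummer_phase_function:
  fixes \<alpha> w w1 w2 q :: "real \<Rightarrow> real" and lam :: real
  assumes d\<alpha>: "\<And>t. (\<alpha> has_real_derivative w t) (at t)"
    and dw: "\<And>t. (w has_real_derivative w1 t) (at t)"
    and dw1: "\<And>t. (w1 has_real_derivative w2 t) (at t)"
    and wpos: "\<And>t. w t > 0"
    and kummer: "\<And>t. (w t)^2 = lam^2 * q t - 1/2 * (w2 t / w t) + 3/4 * (w1 t / w t)^2"
  shows "is_phase_function lam q \<alpha>"
proof -
  note solution = kummer_shifted_solution[OF d\<alpha> dw dw1 wpos kummer]
  have shift: "cos (x - pi/2) = sin x" "sin (x - pi/2) = - cos x" for x :: real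
    by (simp_all add: cos_diff sin_diff)
  define Q where "Q = (\<lambda>t. w1 t / (2 * sqrt (w t) ^ 3))"
  define u where "u = (\<lambda>t. cos (\<alpha> t) / sqrt (w t))"
  define v where "v = (\<lambda>t. sin (\<alpha> t) / sqrt (w t))"
  define u1 where "u1 = (\<lambda>t. - (sin (\<alpha> t) * sqrt (w t) + cos (\<alpha> t) * Q t))"
  define v1 where "v1 = (\<lambda>t. cos (\<alpha> t) * sqrt (w t) - sin (\<alpha> t) * Q t)"
  have du: "(u has_real_derivative u1 t) (at t)"
    and du1: "(u1 has_real_derivative - (lam^2 * q t * u t)) (at t)" for t
    using solution[where c=0] by (simp_all add: u_def u1_def Q_def)
  have dv: "(v has_real_derivative v1 t) (at t)"
    and dv1: "(v1 has_real_derivative - (lam^2 * q t * v t)) (at t)" for t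
    using solution[where c="pi/2"] by (simp_all add: shift v_def v1_def Q_def)
  have wronskian: "u t * v1 t - u1 t * v t = 1" for t
  proof -
    have root: "sqrt (w t) * (sqrt (w t) * x) = w t * x" for x
      using wpos[of t] by (simp add: mult.assoc[symmetric])
    have "u t * v1 t - u1 t * v t = (cos (\<alpha> t))^2 + (sin (\<alpha> t))^2"
      using wpos[of t]
      by (simp add: u_def v_def u1_def v1_def field_simps power2_eq_square root) (simp flip: distrib_left)
    also have "\<dots> = 1" by simp
    finally show ?thesis .
  qed
  have "deriv \<alpha> = w"
    using d\<alpha> by (auto intro!: ext DERIV_imp_deriv)
  then have "u = (\<lambda>t. cos (\<alpha> t) / sqrt \<bar>deriv \<alpha> t\<bar>)" "v = (\<lambda>t. sin (\<alpha> t) / sqrt \<bar>deriv \<alpha> t\<bar>)"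
    using wpos by (auto simp: u_def v_def less_imp_le)
  then show ?thesis
    unfolding is_phase_function_def
    using wronskian_solution_basis[OF du du1 dv dv1 wronskian] by simp
qed

theorem theorem3p2:
  fixes lam :: real and q \<sigma> :: "real \<Rightarrow> real"
  assumes lam_pos: "lam > 0"
    and q_smooth: "smooth_fun q"
    and q_pos: "\<forall>t. q t > 0"
    and x_onto: "surj (xmap q)"
    and sigma_L1: "integrable lborel \<sigma>"
    and sigma_cont: "continuous_on UNIV \<sigma>"
    and sigma_eq: "\<forall>x. \<sigma> x = Sop lam (Top lam \<sigma>) x + pfun q x"
  shows
    "let \<delta> = Top lam \<sigma>;
         \<delta>t = (\<lambda>t. \<delta> (xmap q t));
         \<alpha> = (\<lambda>t. lam * sint 0 t (\<lambda>u. sqrt (q u) * exp (\<delta> (xmap q u) / 2)));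
         pt = (\<lambda>t. (1 / q t) * (5/4 * (deriv q t / q t)^2 - deriv (deriv q) t / q t))
     in (Ck 2 \<delta> \<and>
         (\<forall>x. deriv (deriv \<delta>) x - 1/4 * (deriv \<delta> x)^2 + 4 * lam^2 * (exp (\<delta> x) - 1) = pfun q x))
      \<and> (Ck 2 \<delta>t \<and>
         (\<forall>t. deriv (deriv \<delta>t) t - deriv q t / (2 * q t) * deriv \<delta>t t - 1/4 * (deriv \<delta>t t)^2
              + 4 * lam^2 * q t * (exp (\<delta>t t) - 1) = q t * pt t))
      \<and> (Ck 3 \<alpha> \<and>
         (\<forall>t. (deriv \<alpha> t)^2 = lam^2 * q t - 1/2 * (deriv (deriv (deriv \<alpha>)) t / deriv \<alpha> t)
              + 3/4 * (deriv (deriv \<alpha>) t / deriv \<alpha> t)^2))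
      \<and> is_phase_function lam q \<alpha>"
proof -
  interpret positive_potential q
    using q_smooth q_pos x_onto by unfold_locales auto
  obtain d1 where d\<delta>: "\<And>x. (Top lam \<sigma> has_real_derivative d1 x) (at x)"
    and dd1: "\<And>x. (d1 has_real_derivative (\<sigma> x - 4*lam^2 * Top lam \<sigma> x)) (at x)"
    using Top_second_derivative[OF lam_pos sigma_L1 sigma_cont] by blast
  have "continuous_on UNIV (Top lam \<sigma>)"
    using d\<delta> by (meson DERIV_isCont continuous_at_imp_continuous_on)
  then have cd2: "continuous_on UNIV (\<lambda>x. \<sigma> x - 4*lam^2 * Top lam \<sigma> x)"
    by (auto intro!: continuous_intros sigma_cont)
  note part1 = Ck2_intro[OF d\<delta> dd1 cd2]
  have eq1: "\<sigma> x - 4*lam^2 * Top lam \<sigma> x - 1/4 * (d1 x)^2 + 4 * lam^2 * (exp (Top lam \<sigma> x) - 1)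
      = pfun q x" for x
    using sigma_eq part1(2) by (simp add: Sop_def algebra_simps)
  note part2 = transformed_equation[OF d\<delta> dd1 cd2 eq1]
  note part2_C2 = Ck2_intro[OF part2(1-3)]
  note part3 = alpha_kummer[OF lam_pos part2(1-4)]
  note part3_C3 = Ck3_intro[OF part3(1-4)]
  note part4 = kummer_phase_function[OF part3(1-3,5,6)]
  show ?thesis
    unfolding Let_def using part1 eq1 part2(4) part2_C2 part3(6) part3_C3 part4
    by (simp add: ptilde_def)
qed

end
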